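(* Let $A$ be an $n$-qubit algorithm with $A|0^n\rangle=\sum_{x\in\{0,1\}^n}\alpha_x|x\rangle$, let $f:\{0,1\}^n\to\{0,1\}$ partition the basis states into good states $G=\{x:f(x)=1\}$ and bad states $B=\{x:f(x)=0\}$, let $\hat{\mathcal{O}}_p$ be a bounded-error oracle for $f$ with $p\in(1/2,1)$, and let $\delta>0$. For an appropriate $k=O\big(\frac{2p}{(p-1/2)^2}\log(1/\delta)\big)$, let $\hat A$ be the circuit on registers $R_1$ ($n$ qubits), $R_{21},\dots,R_{2k}$ (one qubit each) and $R_{maj}$ (one qubit), all initialised to $|0\rangle$, that: applies $A$ to $R_1$; for $i=1,\dots,k$ applies $\hat{\mathcal{O}}_p$ to $R_1R_{2i}$; and finally applies a majority gate controlled on $R_1$, with inputs $R_{21},\dots,R_{2k}$, writing the majority value into $R_{maj}$. Then, ignoring the states of ancill\ae, $$\hat A|0^{n+k+1}\rangle=\sum_{x\in G}\alpha_x|x\rangle\big[\eta^g_{x0}|\cdots\rangle|0\rangle+\eta^g_{x1}|\cdots\rangle|1\rangle\big]+\sum_{x\in B}\alpha_x|x\rangle\big[\eta^b_{x0}|\cdots\rangle|0\rangle+\eta^b_{x1}|\cdots\rangle|1\rangle\big]$$ (the last qubit being $R_{maj}$, and $|\cdots\rangle$ denoting normalized states of the intermediate registers), such that $|\eta^g_{x0}|^2\le\delta$ and $|\eta^b_{x1}|^2\le\delta$ for all relevant $x$.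
   Context: A bounded-error oracle $\hat{\mathcal{O}}_p$ for $f$ (with $p\in(1/2,1)$) is a unitary acting on $|x\rangle|0\rangle$ ($x\in\{0,1\}^n$, one output qubit) as $|x\rangle|0\rangle\mapsto|x\rangle(a_{x,0}|0\rangle+a_{x,1}|1\rangle)$ with $|a_{x,f(x)}|^2\ge p$, i.e. it marks $x$ correctly with probability at least $p$. The majority gate sets the output bit to $1$ iff at least $k/2$ of its $k$ input bits are $1$. *)

theory Defs
  imports Complex_Main
begin

text \<open>Computational basis states of m qubits are bit strings of length m;
  a state (vector) is a function from bit strings to amplitudes, and an operator
  on m qubits is given by its matrix entries  U y x = <y|U|x>.\<close>

definition bits :: "nat \<Rightarrow> bool list set" where
  "bits m = {xs. length xs = m}"

definition unitary :: "nat \<Rightarrow> (bool list \<Rightarrow> bool list \<Rightarrow> complex) \<Rightarrow> bool" where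
  "unitary m U \<longleftrightarrow>
     (\<forall>x\<in>bits m. \<forall>x'\<in>bits m.
        (\<Sum>y\<in>bits m. cnj (U y x) * U y x') = (if x = x' then 1 else 0))"

definition ket0 :: "nat \<Rightarrow> bool list \<Rightarrow> complex" where
  "ket0 m = (\<lambda>y. if y = replicate m False then 1 else 0)"

definition sel :: "bool list \<Rightarrow> nat list \<Rightarrow> bool list" where
  "sel y ps = map (\<lambda>i. y ! i) ps"

definition put :: "bool list \<Rightarrow> nat list \<Rightarrow> bool list \<Rightarrow> bool list" where
  "put y ps z = foldl (\<lambda>acc (i, b). acc[i := b]) y (zip ps z)"

definition apply_on ::
  "nat list \<Rightarrow> (bool list \<Rightarrow> bool list \<Rightarrow> complex) \<Rightarrow> (bool list \<Rightarrow> complex) \<Rightarrow> bool list \<Rightarrow> complex" where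
  "apply_on ps G \<psi> y = (\<Sum>z\<in>bits (length ps). G (sel y ps) z * \<psi> (put y ps z))"

definition bounded_error_oracle ::
  "nat \<Rightarrow> (bool list \<Rightarrow> bool) \<Rightarrow> real \<Rightarrow> (bool list \<Rightarrow> bool list \<Rightarrow> complex) \<Rightarrow> bool" where
  "bounded_error_oracle n f p Orc \<longleftrightarrow>
     unitary (n + 1) Orc \<and>
     (\<forall>x\<in>bits n. \<forall>y\<in>bits n. \<forall>c. y \<noteq> x \<longrightarrow> Orc (y @ [c]) (x @ [False]) = 0) \<and>
     (\<forall>x\<in>bits n. p \<le> (cmod (Orc (x @ [f x]) (x @ [False])))\<^sup>2)"

definition majority :: "nat \<Rightarrow> bool list \<Rightarrow> bool" where
  "majority k bs \<longleftrightarrow> k \<le> 2 * length (filter id bs)"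

text \<open>Majority gate on k+1 qubits: |b_1..b_k>|c> \<mapsto> |b_1..b_k>|c xor maj(b)>.\<close>
definition maj_gate :: "nat \<Rightarrow> bool list \<Rightarrow> bool list \<Rightarrow> complex" where
  "maj_gate k y z =
     (if take k y = take k z \<and> y ! k = (z ! k \<noteq> majority k (take k z)) then 1 else 0)"

text \<open>The circuit \<hat>A: registers R1 = positions 0..n-1, R_{2i} = position n+i-1
  (i = 1..k), R_maj = position n+k; all initialised to 0.\<close>
definition A_hat ::
  "nat \<Rightarrow> nat \<Rightarrow> (bool list \<Rightarrow> bool list \<Rightarrow> complex) \<Rightarrow> (bool list \<Rightarrow> bool list \<Rightarrow> complex)
     \<Rightarrow> bool list \<Rightarrow> complex" where
  "A_hat n k A Orc =
     (let s1 = apply_on [0..<n] A (ket0 (n + k + 1));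
          s2 = foldl (\<lambda>\<psi> i. apply_on ([0..<n] @ [n + i]) Orc \<psi>) s1 [0..<k]
      in apply_on [n..<n + k + 1] (maj_gate k) s2)"

end

theory Submission
  imports Defs
begin

text \<open>Since the oracle does not disturb the input register, after A and the k oracle calls the
  amplitude of |x\<rangle>|w\<rangle>|0\<rangle> is \<alpha>_x \<Prod>_j a_{x,w_j}, and the majority gate moves it to
  |x\<rangle>|w\<rangle>|maj w\<rangle>. Normalising the ancilla part, |\<eta>_{x,c}|^2 is the probability that k
  independent answers, each correct with probability r \<ge> p, have majority c. For k = 2m and
  c the wrong value at most m answers are correct, so each such word has probability at most
  (r(1-r))^m, and the 2^k words together at most (4r(1-r))^m \<le> exp(-4(p-1/2)^2 m) \<le> \<delta>.\<close>

lemma card_bits: "card (bits m) = 2 ^ m"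
proof -
  have "bits m = {xs. set xs \<subseteq> UNIV \<and> length xs = m}" by (auto simp: bits_def)
  thus ?thesis using card_lists_length_eq[of "UNIV :: bool set" m] by simp
qed

lemma finite_bits [simp]: "finite (bits m)"
  by (rule card_ge_0_finite) (simp add: card_bits)

lemma replicate_in_bits [simp]: "replicate m b \<in> bits m"
  by (simp add: bits_def)

lemma sum_bits_Suc: "(\<Sum>y\<in>bits (Suc m). g y) = (\<Sum>z\<in>bits m. \<Sum>b\<in>UNIV. g (z @ [b]))"
proof -
  have "bits (Suc m) = (\<lambda>(z, b). z @ [b]) ` (bits m \<times> UNIV)"
  proof (intro equalityI subsetI)
    fix y assume "y \<in> bits (Suc m)"
    then have "y = butlast y @ [last y]" and "butlast y \<in> bits m"
      by (auto simp: bits_def intro!: append_butlast_last_id[symmetric])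
    then show "y \<in> (\<lambda>(z, b). z @ [b]) ` (bits m \<times> UNIV)" by force
  qed (auto simp: bits_def)
  moreover have "inj_on (\<lambda>(z, b). z @ [b]) (bits m \<times> (UNIV :: bool set))"
    by (auto simp: inj_on_def)
  ultimately show ?thesis
    by (simp add: sum.reindex sum.cartesian_product split_def)
qed

lemma sum_eq_single:
  assumes "finite S" "a \<in> S" "\<And>z. z \<in> S \<Longrightarrow> z \<noteq> a \<Longrightarrow> g z = 0"
  shows "sum g S = g a"
  using assms by (simp add: sum.remove sum.neutral)

lemma replicate_False_iff: "length v = r \<Longrightarrow> v = replicate r False \<longleftrightarrow> True \<notin> set v"
  by (metis (full_types) in_set_replicate replicate_eqI)

lemma length_put [simp]: "length (put y ps z) = length y"
  unfolding put_def by (induction ps z arbitrary: y rule: list_induct2') auto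

lemma put_snoc: "length z = length ps \<Longrightarrow> put y (ps @ [i]) (z @ [b]) = (put y ps z)[i := b]"
  by (simp add: put_def)

lemma put_upt:
  "m + length z \<le> length y \<Longrightarrow> put y [m..<m + length z] z = take m y @ z @ drop (m + length z) y"
proof (induction z arbitrary: m y)
  case Nil
  then show ?case by (simp add: put_def)
next
  case (Cons b z)
  have "put y [m..<m + length (b # z)] (b # z) = put (y[m := b]) [Suc m..<Suc m + length z] z"
    by (simp add: put_def upt_rec)
  also have "\<dots> = take (Suc m) (y[m := b]) @ z @ drop (Suc m + length z) y"
    using Cons.prems Cons.IH[of "Suc m" "y[m := b]"] by simp
  also have "take (Suc m) (y[m := b]) = take m y @ [b]"
    using Cons.prems by (simp add: take_Suc_conv_app_nth)
  finally show ?case by simp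
qed

lemma sel_upt: "m + r \<le> length y \<Longrightarrow> sel y [m..<m + r] = take r (drop m y)"
  by (rule nth_equalityI) (auto simp: sel_def)

lemma apply_on_cong:
  assumes "\<And>y. y \<in> bits N \<Longrightarrow> \<psi> y = \<psi>' y" and "y \<in> bits N"
  shows "apply_on ps G \<psi> y = apply_on ps G \<psi>' y"
  using assms unfolding apply_on_def by (intro sum.cong) (auto simp: bits_def)

lemma apply_on_upt:
  assumes "m + r \<le> length y"
  shows "apply_on [m..<m + r] G \<psi> y
    = (\<Sum>z\<in>bits r. G (take r (drop m y)) z * \<psi> (take m y @ z @ drop (m + r) y))"
  unfolding apply_on_def using assms
  by (intro sum.cong) (auto simp: bits_def sel_upt put_upt[symmetric])

lemma apply_on_upt_snoc:
  assumes "n \<le> length y"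
  shows "apply_on ([0..<n] @ [j]) G \<psi> y
    = (\<Sum>z\<in>bits n. \<Sum>b\<in>UNIV. G (take n y @ [y ! j]) (z @ [b]) * \<psi> ((z @ drop n y)[j := b]))"
proof -
  have "sel y ([0..<n] @ [j]) = take n y @ [y ! j]"
    using sel_upt[of 0 n y] assms by (simp add: sel_def)
  moreover have "put y ([0..<n] @ [j]) (z @ [b]) = (z @ drop n y)[j := b]" if "z \<in> bits n" for z b
    using that assms put_upt[of 0 z y] by (simp add: bits_def put_snoc)
  ultimately show ?thesis
    unfolding apply_on_def by (simp add: sum_bits_Suc)
qed

definition oracle_amp :: "(bool list \<Rightarrow> bool list \<Rightarrow> complex) \<Rightarrow> bool list \<Rightarrow> bool \<Rightarrow> complex" where
  "oracle_amp Orc x b = Orc (x @ [b]) (x @ [False])"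

text \<open>Closed form of the state after A and the first i oracle calls: their answers occupy
  the i qubits following R_1, and all later qubits are still 0.\<close>
definition query_state ::
  "nat \<Rightarrow> (bool list \<Rightarrow> bool list \<Rightarrow> complex) \<Rightarrow> (bool list \<Rightarrow> bool list \<Rightarrow> complex)
     \<Rightarrow> nat \<Rightarrow> bool list \<Rightarrow> complex" where
  "query_state n A Orc i y =
     A (take n y) (replicate n False) * prod_list (map (oracle_amp Orc (take n y)) (take i (drop n y)))
       * of_bool (True \<notin> set (drop (n + i) y))"

lemma apply_on_ket0:
  assumes "y \<in> bits (n + r)"
  shows "apply_on [0..<n] A (ket0 (n + r)) y = query_state n A Orc 0 y"
proof -
  have ket0_append: "ket0 (n + r) (z @ drop n y)
      = of_bool (z = replicate n False \<and> True \<notin> set (drop n y))" if "z \<in> bits n" for z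
    using that assms replicate_False_iff[of "drop n y" r]
    by (auto simp: ket0_def bits_def replicate_add)
  have "apply_on [0..<n] A (ket0 (n + r)) y
      = (\<Sum>z\<in>bits n. A (take n y) z * ket0 (n + r) (z @ drop n y))"
    using apply_on_upt[of 0 n y] assms by (simp add: bits_def)
  also have "\<dots> = (\<Sum>z\<in>bits n. if z = replicate n False
      then A (take n y) z * of_bool (True \<notin> set (drop n y)) else 0)"
    by (intro sum.cong) (auto simp: ket0_append)
  also have "\<dots> = query_state n A Orc 0 y"
    by (simp add: query_state_def)
  finally show ?thesis .
qed

lemma query_state_update:
  assumes "z \<in> bits n" and "n + i < length y"
  shows "query_state n A Orc i ((z @ drop n y)[n + i := b])
    = A z (replicate n False) * prod_list (map (oracle_amp Orc z) (take i (drop n y)))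
        * of_bool (\<not> b \<and> True \<notin> set (drop (Suc (n + i)) y))"
proof -
  have "drop (n + i) y = y ! (n + i) # drop (Suc (n + i)) y"
    using assms(2) by (rule Cons_nth_drop_Suc[symmetric])
  then have "drop (n + i) ((z @ drop n y)[n + i := b]) = b # drop (Suc (n + i)) y"
    using assms by (simp add: bits_def list_update_append drop_update_swap add.commute)
  then show ?thesis
    using assms by (simp add: query_state_def bits_def list_update_append)
qed

lemma apply_oracle_query_state:
  assumes bounded: "bounded_error_oracle n f p Orc" and y: "n + i < length y"
  shows "apply_on ([0..<n] @ [n + i]) Orc (query_state n A Orc i) y = query_state n A Orc (Suc i) y"
proof -
  define x where "x = take n y"
  have x: "x \<in> bits n" using y by (simp add: x_def bits_def)
  have off_diagonal: "Orc (x @ [c]) (z @ [False]) = 0" if "z \<in> bits n" "z \<noteq> x" for z c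
    using bounded that x by (simp add: bounded_error_oracle_def)
  \<comment> \<open>inputs with answer qubit 1 drop out, since qubit n + i of the state is still 0\<close>
  have "apply_on ([0..<n] @ [n + i]) Orc (query_state n A Orc i) y
      = (\<Sum>z\<in>bits n. Orc (x @ [y ! (n + i)]) (z @ [False])
           * (A z (replicate n False) * prod_list (map (oracle_amp Orc z) (take i (drop n y)))
              * of_bool (True \<notin> set (drop (Suc (n + i)) y))))"
    using y by (simp add: apply_on_upt_snoc query_state_update UNIV_bool x_def cong: sum.cong)
  also have "\<dots> = oracle_amp Orc x (y ! (n + i))
      * (A x (replicate n False) * prod_list (map (oracle_amp Orc x) (take i (drop n y)))
         * of_bool (True \<notin> set (drop (Suc (n + i)) y)))"
    using x off_diagonal by (subst sum_eq_single[of _ x]) (auto simp: oracle_amp_def)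
  also have "\<dots> = query_state n A Orc (Suc i) y"
    using y by (simp add: query_state_def x_def take_Suc_conv_app_nth)
  finally show ?thesis .
qed

lemma maj_gate_snoc:
  "length v = k \<Longrightarrow> length w = k \<Longrightarrow>
    maj_gate k (w @ [c]) (v @ [b]) = of_bool (v = w \<and> c = (b \<noteq> majority k v))"
  by (auto simp: maj_gate_def nth_append)

lemma apply_maj_gate_query_state:
  assumes "x \<in> bits n" "w \<in> bits k"
  shows "apply_on [n..<n + k + 1] (maj_gate k) (query_state n A Orc k) (x @ w @ [c])
    = A x (replicate n False) * prod_list (map (oracle_amp Orc x) w) * of_bool (majority k w = c)"
proof -
  have len: "length x = n" "length w = k"
    using assms by (simp_all add: bits_def)
  have "apply_on [n..<n + k + 1] (maj_gate k) (query_state n A Orc k) (x @ w @ [c])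
      = (\<Sum>z\<in>bits (Suc k). maj_gate k (w @ [c]) z * query_state n A Orc k (x @ z))"
    using apply_on_upt[of n "Suc k" "x @ w @ [c]"] len by (simp del: upt_Suc)
  also have "\<dots> = (\<Sum>v\<in>bits k. \<Sum>b\<in>UNIV. maj_gate k (w @ [c]) (v @ [b]) * query_state n A Orc k (x @ v @ [b]))"
    by (simp add: sum_bits_Suc)
  also have "\<dots> = (\<Sum>v\<in>bits k. if v = w then A x (replicate n False) * prod_list (map (oracle_amp Orc x) w)
      * of_bool (majority k w = c) else 0)"
    using assms by (intro sum.cong) (auto simp: maj_gate_snoc query_state_def bits_def UNIV_bool)
  also have "\<dots> = A x (replicate n False) * prod_list (map (oracle_amp Orc x) w) * of_bool (majority k w = c)"
    using assms by simp
  finally show ?thesis .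
qed

lemma A_hat_apply:
  assumes bounded: "bounded_error_oracle n f p Orc" and "x \<in> bits n" "w \<in> bits k"
  shows "A_hat n k A Orc (x @ w @ [c])
    = A x (replicate n False) * prod_list (map (oracle_amp Orc x) w) * of_bool (majority k w = c)"
proof -
  let ?queries = "\<lambda>i. foldl (\<lambda>\<psi> i. apply_on ([0..<n] @ [n + i]) Orc \<psi>)
    (apply_on [0..<n] A (ket0 (n + k + 1))) [0..<i]"
  have "?queries i y = query_state n A Orc i y" if "i \<le> k" "y \<in> bits (n + k + 1)" for i y
    using that
  proof (induction i arbitrary: y)
    case 0
    then show ?case using apply_on_ket0[of y n "k + 1"] by (simp add: add.assoc)
  next
    case (Suc i)
    then have "?queries (Suc i) y = apply_on ([0..<n] @ [n + i]) Orc (query_state n A Orc i) y"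
      by (auto intro: apply_on_cong)
    also have "\<dots> = query_state n A Orc (Suc i) y"
      using Suc.prems by (intro apply_oracle_query_state[OF bounded]) (simp add: bits_def)
    finally show ?case .
  qed
  then have "A_hat n k A Orc (x @ w @ [c])
      = apply_on [n..<n + k + 1] (maj_gate k) (query_state n A Orc k) (x @ w @ [c])"
    unfolding A_hat_def Let_def
    by (rule apply_on_cong[of "n + k + 1"]) (use assms in \<open>auto simp: bits_def\<close>)
  then show ?thesis
    using apply_maj_gate_query_state assms by simp
qed

lemma oracle_amp_norm:
  assumes bounded: "bounded_error_oracle n f p Orc" and x: "x \<in> bits n"
  shows "(cmod (oracle_amp Orc x False))\<^sup>2 + (cmod (oracle_amp Orc x True))\<^sup>2 = 1"
proof -
  have "x @ [False] \<in> bits (Suc n)" using x by (simp add: bits_def)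
  then have "1 = (\<Sum>y\<in>bits (Suc n). cnj (Orc y (x @ [False])) * Orc y (x @ [False]))"
    using bounded by (simp add: bounded_error_oracle_def unitary_def)
  also have "\<dots> = (\<Sum>z\<in>bits n. \<Sum>b\<in>UNIV. cnj (Orc (z @ [b]) (x @ [False])) * Orc (z @ [b]) (x @ [False]))"
    by (rule sum_bits_Suc)
  also have "\<dots> = (\<Sum>b\<in>UNIV. cnj (oracle_amp Orc x b) * oracle_amp Orc x b)"
    using bounded x by (subst sum_eq_single[of _ x]) (auto simp: bounded_error_oracle_def oracle_amp_def)
  also have "\<dots> = of_real ((cmod (oracle_amp Orc x False))\<^sup>2 + (cmod (oracle_amp Orc x True))\<^sup>2)"
    unfolding of_real_add complex_norm_square by (simp add: UNIV_bool mult.commute)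
  finally show ?thesis
    by (metis of_real_eq_1_iff)
qed

lemma norm_prod_list_map:
  fixes h :: "'b \<Rightarrow> 'a :: real_normed_div_algebra"
  shows "norm (prod_list (map h w)) = prod_list (map (\<lambda>b. norm (h b)) w)"
  by (induction w) (simp_all add: norm_mult)

lemma prod_list_map_bool:
  fixes g :: "bool \<Rightarrow> 'a :: comm_monoid_mult"
  shows "prod_list (map g w) = g b ^ count_list w b * g (\<not> b) ^ count_list w (\<not> b)"
  by (induction w) (auto simp: ac_simps)

lemma count_list_bool: "count_list w b + count_list w (\<not> b) = length w"
  by (induction w) auto

lemma count_list_le_if_majority_ne:
  assumes "length w = 2 * m" and "majority (2 * m) w \<noteq> b"
  shows "count_list w b \<le> m"
proof -
  have "count_list w True = length (filter id w)"
    by (induction w) auto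
  then show ?thesis
    using assms count_list_bool[of w True] by (cases b) (auto simp: majority_def)
qed

lemma power_mult_le_balanced:
  fixes a b :: real
  assumes "0 \<le> a" "a \<le> b" "i \<le> m" "i + j = 2 * m"
  shows "b ^ i * a ^ j \<le> (a * b) ^ m"
proof -
  have j: "j = i + 2 * (m - i)" using assms by simp
  have "b ^ i * a ^ j = (a * b) ^ i * (a * a) ^ (m - i)"
    unfolding j by (simp add: power_add power_mult power_mult_distrib power2_eq_square ac_simps)
  also have "\<dots> \<le> (a * b) ^ i * (a * b) ^ (m - i)"
    using assms by (intro mult_left_mono power_mono mult_left_mono) auto
  also have "\<dots> = (a * b) ^ m"
    using assms by (simp flip: power_add)
  finally show ?thesis .
qed

lemma majority_error_le:
  fixes g :: "bool \<Rightarrow> real"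
  assumes "0 \<le> g (\<not> b)" "g (\<not> b) \<le> g b"
  shows "(\<Sum>w\<in>bits (2 * m). of_bool (majority (2 * m) w \<noteq> b) * prod_list (map g w))
    \<le> (4 * (g b * g (\<not> b))) ^ m"
proof -
  have word_le: "of_bool (majority (2 * m) w \<noteq> b) * prod_list (map g w) \<le> (g b * g (\<not> b)) ^ m"
    if "w \<in> bits (2 * m)" for w
  proof (cases "majority (2 * m) w = b")
    case False
    with that have "count_list w b \<le> m" "count_list w b + count_list w (\<not> b) = 2 * m"
      using count_list_bool[of w b] by (auto simp: bits_def intro: count_list_le_if_majority_ne)
    then have "g b ^ count_list w b * g (\<not> b) ^ count_list w (\<not> b) \<le> (g (\<not> b) * g b) ^ m"
      using assms by (intro power_mult_le_balanced)
    then show ?thesis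
      using False by (simp add: prod_list_map_bool[of g w b] mult.commute)
  next
    case True
    then show ?thesis using assms by simp
  qed
  have "(\<Sum>w\<in>bits (2 * m). of_bool (majority (2 * m) w \<noteq> b) * prod_list (map g w))
      \<le> (\<Sum>w\<in>bits (2 * m). (g b * g (\<not> b)) ^ m)"
    by (rule sum_mono) (rule word_le)
  also have "\<dots> = (4 * (g b * g (\<not> b))) ^ m"
    by (simp add: card_bits power_mult power_mult_distrib)
  finally show ?thesis .
qed

lemma four_mult_complement_power_le_exp:
  fixes p r :: real
  assumes "1/2 \<le> p" "p \<le> r" "r \<le> 1"
  shows "(4 * (r * (1 - r))) ^ m \<le> exp (- 4 * (p - 1/2)\<^sup>2 * m)"
proof -
  have "4 * (r * (1 - r)) \<le> 1 - 4 * (p - 1/2)\<^sup>2"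
  proof -
    have "(p - 1/2)\<^sup>2 \<le> (r - 1/2)\<^sup>2" using assms by (intro power_mono) auto
    then show ?thesis by (simp add: power2_eq_square algebra_simps)
  qed
  also have "\<dots> \<le> exp (- 4 * (p - 1/2)\<^sup>2)"
    using exp_ge_add_one_self[of "- 4 * (p - 1/2)\<^sup>2"] by simp
  finally have "(4 * (r * (1 - r))) ^ m \<le> exp (- 4 * (p - 1/2)\<^sup>2) ^ m"
    using assms by (intro power_mono) auto
  then show ?thesis
    by (simp add: exp_of_nat_mult[symmetric] mult.commute)
qed

lemma majority_vote_error:
  assumes bounded: "bounded_error_oracle n f p Orc" and x: "x \<in> bits n" and p: "1/2 \<le> p"
  shows "(\<Sum>w\<in>bits (2 * m). (cmod (of_bool (majority (2 * m) w \<noteq> f x)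
      * prod_list (map (oracle_amp Orc x) w)))\<^sup>2) \<le> exp (- 4 * (p - 1/2)\<^sup>2 * m)"
proof -
  define g where "g = (\<lambda>b. (cmod (oracle_amp Orc x b))\<^sup>2)"
  have wrong: "g (\<not> f x) = 1 - g (f x)"
    using oracle_amp_norm[OF bounded x] by (cases "f x") (simp_all add: g_def)
  have correct: "p \<le> g (f x)"
    using bounded x by (simp add: bounded_error_oracle_def g_def oracle_amp_def)
  have "0 \<le> g (\<not> f x)" by (simp add: g_def)
  then have g_le: "0 \<le> g (\<not> f x)" "g (\<not> f x) \<le> g (f x)" "g (f x) \<le> 1"
    using wrong correct p by linarith+
  have "(cmod (of_bool (majority (2 * m) w \<noteq> f x) * prod_list (map (oracle_amp Orc x) w)))\<^sup>2
      = of_bool (majority (2 * m) w \<noteq> f x) * prod_list (map g w)" for w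
    by (simp add: g_def norm_mult power_mult_distrib norm_prod_list_map prod_list_power comp_def)
  then have "(\<Sum>w\<in>bits (2 * m). (cmod (of_bool (majority (2 * m) w \<noteq> f x)
        * prod_list (map (oracle_amp Orc x) w)))\<^sup>2)
      = (\<Sum>w\<in>bits (2 * m). of_bool (majority (2 * m) w \<noteq> f x) * prod_list (map g w))"
    by simp
  also have "\<dots> \<le> (4 * (g (f x) * (1 - g (f x)))) ^ m"
    using majority_error_le[OF g_le(1,2)] by (simp only: wrong)
  also have "\<dots> \<le> exp (- 4 * (p - 1/2)\<^sup>2 * m)"
    using p correct g_le(3) by (rule four_mult_complement_power_le_exp)
  finally show ?thesis .
qed

lemma exists_repetition_count:
  fixes p \<delta> :: real
  assumes p: "1/2 < p" "p < 1" and \<delta>: "0 < \<delta>"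
  obtains m :: nat
  where "real (2 * m) \<le> 2 * p / (p - 1/2)\<^sup>2 * max 1 (ln (1 / \<delta>))"
    and "exp (- 4 * (p - 1/2)\<^sup>2 * m) \<le> \<delta>"
proof
  define e where "e = (p - 1/2)\<^sup>2"
  define L where "L = max 1 (ln (1 / \<delta>))"
  define m where "m = nat \<lceil>L / (4 * e)\<rceil>"
  have "(p - 1/2)\<^sup>2 < (1/2)\<^sup>2"
    using p by (intro power_strict_mono) auto
  then have e: "0 < e" "e < 1/4"
    using p by (simp_all add: e_def power2_eq_square)
  have L: "1 \<le> L" "ln (1 / \<delta>) \<le> L"
    by (simp_all add: L_def)
  have m: "L / (4 * e) \<le> m" "m \<le> L / (4 * e) + 1"
    using e L by (simp_all add: m_def)
  have "2 \<le> L / (2 * e)"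
    using e L by (simp add: le_divide_eq)
  then have "real (2 * m) \<le> L / e"
    using m(2) e by (simp add: field_simps)
  also have "\<dots> \<le> 2 * p / e * L"
    using p e L by (simp add: field_simps)
  finally show "real (2 * m) \<le> 2 * p / (p - 1/2)\<^sup>2 * max 1 (ln (1 / \<delta>))"
    by (simp add: e_def L_def)
  have "ln (1 / \<delta>) \<le> 4 * e * m"
    using m(1) L e by (simp add: field_simps)
  then have "exp (- 4 * e * m) \<le> exp (- ln (1 / \<delta>))"
    by simp
  also have "\<dots> = \<delta>"
    using \<delta> by (simp add: ln_div)
  finally show "exp (- 4 * (p - 1/2)\<^sup>2 * m) \<le> \<delta>"
    by (simp add: e_def)
qed

lemma unit_vector_factorization:
  fixes v :: "'a \<Rightarrow> complex"
  assumes "finite W" "w\<^sub>0 \<in> W"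
  shows "\<exists>\<eta> \<phi>. (\<Sum>w\<in>W. (cmod (\<phi> w))\<^sup>2) = 1 \<and> (\<forall>w\<in>W. v w = \<eta> * \<phi> w)
    \<and> (cmod \<eta>)\<^sup>2 = (\<Sum>w\<in>W. (cmod (v w))\<^sup>2)"
proof (cases "(\<Sum>w\<in>W. (cmod (v w))\<^sup>2) = 0")
  case True
  then have "\<forall>w\<in>W. v w = 0"
    using assms by (simp add: sum_nonneg_eq_0_iff)
  moreover have "(\<Sum>w\<in>W. (cmod (of_bool (w = w\<^sub>0) :: complex))\<^sup>2) = (\<Sum>w\<in>W. if w = w\<^sub>0 then 1 else 0)"
    by (intro sum.cong) auto
  ultimately show ?thesis
    using assms True by (intro exI[of _ 0] exI[of _ "\<lambda>w. of_bool (w = w\<^sub>0)"]) simp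
next
  case False
  define s where "s = (\<Sum>w\<in>W. (cmod (v w))\<^sup>2)"
  have s: "0 < s"
    using False by (simp add: s_def order_le_neq_trans sum_nonneg)
  have "(\<Sum>w\<in>W. (cmod (v w / sqrt s))\<^sup>2) = (\<Sum>w\<in>W. (cmod (v w))\<^sup>2) / s"
    using s by (simp add: norm_divide power_divide sum_divide_distrib)
  then show ?thesis
    using s by (intro exI[of _ "complex_of_real (sqrt s)"] exI[of _ "\<lambda>w. v w / sqrt s"]) (simp add: s_def)
qed

lemma majority_amplification:
  assumes bounded: "bounded_error_oracle n f p Orc" and p: "1/2 \<le> p"
  obtains \<eta> \<phi> where "\<And>x c. (\<Sum>w\<in>bits (2 * m). (cmod (\<phi> x c w))\<^sup>2) = 1"
    and "\<And>x w c. x \<in> bits n \<Longrightarrow> w \<in> bits (2 * m) \<Longrightarrow>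
      A_hat n (2 * m) A Orc (x @ w @ [c]) = A x (replicate n False) * \<eta> x c * \<phi> x c w"
    and "\<And>x. x \<in> bits n \<Longrightarrow> (cmod (\<eta> x (\<not> f x)))\<^sup>2 \<le> exp (- 4 * (p - 1/2)\<^sup>2 * m)"
proof -
  define v where "v x c w = of_bool (majority (2 * m) w = c) * prod_list (map (oracle_amp Orc x) w)"
    for x c w
  have "\<forall>x c. \<exists>e u. (\<Sum>w\<in>bits (2 * m). (cmod (u w))\<^sup>2) = 1 \<and> (\<forall>w\<in>bits (2 * m). v x c w = e * u w)
      \<and> (cmod e)\<^sup>2 = (\<Sum>w\<in>bits (2 * m). (cmod (v x c w))\<^sup>2)"
    using unit_vector_factorization[OF finite_bits replicate_in_bits] by blast
  then obtain \<eta> \<phi> where unit: "\<And>x c. (\<Sum>w\<in>bits (2 * m). (cmod (\<phi> x c w))\<^sup>2) = 1"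
    and factor: "\<And>x c w. w \<in> bits (2 * m) \<Longrightarrow> v x c w = \<eta> x c * \<phi> x c w"
    and \<eta>_sq: "\<And>x c. (cmod (\<eta> x c))\<^sup>2 = (\<Sum>w\<in>bits (2 * m). (cmod (v x c w))\<^sup>2)"
    by metis
  have amplitude: "A_hat n (2 * m) A Orc (x @ w @ [c]) = A x (replicate n False) * \<eta> x c * \<phi> x c w"
    if "x \<in> bits n" "w \<in> bits (2 * m)" for x w c
    using that A_hat_apply[OF bounded] factor[symmetric] by (simp add: v_def ac_simps)
  have error: "(cmod (\<eta> x (\<not> f x)))\<^sup>2 \<le> exp (- 4 * (p - 1/2)\<^sup>2 * m)" if "x \<in> bits n" for x
    using majority_vote_error[OF bounded that p, of m] by (simp add: \<eta>_sq v_def)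
  show thesis
    by (rule that[OF unit amplitude error])
qed

theorem lemma2:
  shows "\<exists>C::real. C > 0 \<and>
    (\<forall>(n::nat) (A::bool list \<Rightarrow> bool list \<Rightarrow> complex) (f::bool list \<Rightarrow> bool) (p::real) (\<delta>::real)
        (Orc::bool list \<Rightarrow> bool list \<Rightarrow> complex).
      unitary n A \<and> 1/2 < p \<and> p < 1 \<and> bounded_error_oracle n f p Orc \<and> 0 < \<delta> \<longrightarrow>
      (\<exists>k::nat. real k \<le> C * (2 * p / (p - 1/2)\<^sup>2) * max 1 (ln (1 / \<delta>)) \<and>
        (\<exists>(\<eta>::bool list \<Rightarrow> bool \<Rightarrow> complex) (\<phi>::bool list \<Rightarrow> bool \<Rightarrow> bool list \<Rightarrow> complex).
          (\<forall>x\<in>bits n. \<forall>c. (\<Sum>w\<in>bits k. (cmod (\<phi> x c w))\<^sup>2) = 1) \<and>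
          (\<forall>x\<in>bits n. \<forall>w\<in>bits k. \<forall>c.
              A_hat n k A Orc (x @ w @ [c]) = A x (replicate n False) * \<eta> x c * \<phi> x c w) \<and>
          (\<forall>x\<in>bits n. f x \<longrightarrow> (cmod (\<eta> x False))\<^sup>2 \<le> \<delta>) \<and>
          (\<forall>x\<in>bits n. \<not> f x \<longrightarrow> (cmod (\<eta> x True))\<^sup>2 \<le> \<delta>))))"
proof (intro exI[of _ "1::real"] conjI allI impI, goal_cases)
  case 1
  show ?case by simp
next
  case (2 n A f p \<delta> Orc)
  then have p: "1/2 < p" "p < 1" and bounded: "bounded_error_oracle n f p Orc" and \<delta>: "0 < \<delta>"
    by auto
  then have "1/2 \<le> p"
    by simp
  obtain m where k_le: "real (2 * m) \<le> 2 * p / (p - 1/2)\<^sup>2 * max 1 (ln (1 / \<delta>))"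
    and exp_le: "exp (- 4 * (p - 1/2)\<^sup>2 * m) \<le> \<delta>"
    using exists_repetition_count[OF p \<delta>] .
  obtain \<eta> \<phi> where unit: "\<And>x c. (\<Sum>w\<in>bits (2 * m). (cmod (\<phi> x c w))\<^sup>2) = 1"
    and amplitude: "\<And>x w c. x \<in> bits n \<Longrightarrow> w \<in> bits (2 * m) \<Longrightarrow>
      A_hat n (2 * m) A Orc (x @ w @ [c]) = A x (replicate n False) * \<eta> x c * \<phi> x c w"
    and error: "\<And>x. x \<in> bits n \<Longrightarrow> (cmod (\<eta> x (\<not> f x)))\<^sup>2 \<le> exp (- 4 * (p - 1/2)\<^sup>2 * m)"
    by (rule majority_amplification[OF bounded \<open>1/2 \<le> p\<close>, where m = m and A = A]) (rule that)
  show ?case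
    using k_le unit amplitude error exp_le
    by (intro exI[of _ "2 * m"] exI[of _ \<eta>] exI[of _ \<phi>]) force
qed

end
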